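(* Let $X$ be a finite topological space and let $Y$ be a $T_1$-space homotopy equivalent to $X$. Then $X$ is a disjoint union of contractible spaces. *)

theory Defs
  imports "HOL-Analysis.Analysis"
begin

end

theory Submission
  imports Defs
begin

text \<open>A map from a finite space into a \<open>T\<^sub>1\<close>-space is constant on each connected component,
  because a finite connected subset of a \<open>T\<^sub>1\<close>-space is a point. So if \<open>g \<circ> f\<close> is homotopic to
  the identity of \<open>X\<close>, then on each component \<open>C\<close> the map \<open>g \<circ> f\<close> is constant. The homotopy
  carries the connected set \<open>[0,1] \<times> C\<close> onto a connected set meeting \<open>C\<close>, hence into \<open>C\<close>; thus it
  restricts to a contraction of \<open>C\<close>. Finally, the components of a finite space are open.\<close>

lemma t1_space_connectedin_finite_imp_singleton:
  assumes "t1_space X" "connectedin X S" "finite S" "S \<noteq> {}"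
  shows "\<exists>a. S = {a}"
proof (rule ccontr)
  assume "\<nexists>a. S = {a}"
  then have "S \<subseteq> X derived_set_of S"
    using connectedin_imp_perfect_gen assms by blast
  moreover have "X derived_set_of S = {}"
    using assms t1_space_derived_set_of_finite by blast
  ultimately show False
    using assms by blast
qed

lemma continuous_map_t1_constant_on_connected_finite:
  assumes "continuous_map X Y f" "t1_space Y" "connectedin X C" "finite C" "C \<noteq> {}"
  shows "\<exists>b. \<forall>x\<in>C. f x = b"
proof -
  have "connectedin Y (f ` C)"
    using assms connectedin_continuous_map_image by blast
  then obtain b where "f ` C = {b}"
    using t1_space_connectedin_finite_imp_singleton assms by blast
  then show ?thesis
    by blast
qed

lemma homotopic_with_id_connected_component:
  assumes hom: "homotopic_with (\<lambda>x. True) X X f id"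
    and C: "C \<in> connected_components_of X"
  shows "homotopic_with (\<lambda>x. True) (subtopology X C) (subtopology X C) f id"
proof -
  obtain H where H: "continuous_map (prod_topology (top_of_set {0..1::real}) X) X H"
    and H0: "\<And>x. H (0, x) = f x" and H1: "\<And>x. H (1, x) = x"
    using hom unfolding homotopic_with_def by auto
  have "connectedin X (H ` ({0..1} \<times> C))"
  proof (rule connectedin_continuous_map_image[OF H])
    show "connectedin (prod_topology (top_of_set {0..1::real}) X) ({0..1} \<times> C)"
      using connectedin_connected_components_of[OF C]
      by (simp add: connectedin_Times connectedin_subtopology connected_Icc)
  qed
  moreover obtain c where "c \<in> C"
    using C nonempty_connected_components_of by blast
  then have "c \<in> H ` ({0..1} \<times> C)"
    using rev_image_eqI[of "(1::real, c)" _ c H] by (simp add: H1)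
  with \<open>c \<in> C\<close> have "\<not> disjnt C (H ` ({0..1} \<times> C))"
    unfolding disjnt_def by blast
  ultimately have H_into_C: "H ` ({0..1} \<times> C) \<subseteq> C"
    using connected_components_of_maximal[OF C] by blast
  have "continuous_map (prod_topology (top_of_set {0..1}) (subtopology X C)) (subtopology X C) H"
    unfolding continuous_map_in_subtopology
  proof
    show "continuous_map (prod_topology (top_of_set {0..1}) (subtopology X C)) X H"
      using H by (metis continuous_map_from_subtopology prod_topology_subtopology(2))
    show "H \<in> topspace (prod_topology (top_of_set {0..1}) (subtopology X C)) \<rightarrow> C"
      using H_into_C by auto
  qed
  then show ?thesis
    unfolding homotopic_with_def by (auto simp: H0 H1)
qed

lemma contractible_space_if_homotopic_id_constant_on:
  assumes hom: "homotopic_with (\<lambda>x. True) X X f id"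
    and const: "\<And>x. x \<in> topspace X \<Longrightarrow> f x = a"
  shows "contractible_space X"
proof -
  have "homotopic_with (\<lambda>x. True) X X f (\<lambda>x. a)"
    using homotopic_with_imp_continuous_maps[OF hom] const
    by (intro homotopic_with_equal) auto
  then have "homotopic_with (\<lambda>x. True) X X id (\<lambda>x. a)"
    using homotopic_with_trans homotopic_with_symD hom by blast
  then show ?thesis
    unfolding contractible_space_def by blast
qed

lemma finite_connected_component_contractible:
  assumes f: "continuous_map X Y f" and g: "continuous_map Y X g" and "t1_space Y"
    and hom: "homotopic_with (\<lambda>x. True) X X (g \<circ> f) id"
    and C: "C \<in> connected_components_of X" and "finite C"
  shows "contractible_space (subtopology X C)"
proof -
  obtain b where "\<forall>x\<in>C. f x = b"
    using continuous_map_t1_constant_on_connected_finite[OF f] assms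
      connectedin_connected_components_of nonempty_connected_components_of by metis
  moreover have "topspace (subtopology X C) = C"
    using connected_components_of_subset[OF C] by auto
  ultimately show ?thesis
    using contractible_space_if_homotopic_id_constant_on[where a = "g b"]
      homotopic_with_id_connected_component[OF hom C] by (metis comp_apply)
qed

theorem mainTheorem5:
  fixes X :: "'a topology" and Y :: "'b topology"
  assumes "finite (topspace X)"
    and "t1_space Y"
    and "X homotopy_equivalent_space Y"
  shows "\<exists>\<U>. \<Union>\<U> = topspace X \<and> pairwise disjnt \<U> \<and>
           (\<forall>U\<in>\<U>. openin X U \<and> U \<noteq> {} \<and> contractible_space (subtopology X U))"
proof -
  obtain f g where "continuous_map X Y f" "continuous_map Y X g"
    and "homotopic_with (\<lambda>x. True) X X (g \<circ> f) id"
    using assms(3) unfolding homotopy_equivalent_space_def by blast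
  then have "contractible_space (subtopology X C)" if "C \<in> connected_components_of X" for C
    using finite_connected_component_contractible assms(1,2) that
      connected_components_of_subset finite_subset by metis
  moreover have "openin X C" if "C \<in> connected_components_of X" for C
    using open_in_finite_connected_components finite_connected_components_of_finite assms(1) that
    by blast
  ultimately show ?thesis
    using Union_connected_components_of pairwise_disjoint_connected_components_of
      nonempty_connected_components_of by metis
qed

end
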